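(* Let $M$ be a non-quasianalytic weight sequence of moderate growth. Then the derived sequences $S=S(M)$, $K=K(M)$ and $L=L(M)$ are pairwise equivalent.
   Context: A weight sequence is $M=(M_k)_{k\ge0}$ with $M_k=\mu_0\cdots\mu_k$, $1=\mu_0\le\mu_1\le\cdots$, $\mu_k\to\infty$; non-quasianalytic if $\sum1/\mu_k<\infty$; moderate growth: $\exists C\ge1\ \forall j,k: M_{j+k}\le C^{j+k}M_jM_k$. Positive sequences $M,N$ are equivalent if $\sup_{k\ge1}(M_k/N_k)^{1/k}<\infty$ and $\sup_{k\ge1}(N_k/M_k)^{1/k}<\infty$. $\omega_M(t)=\sup_k\log(t^kM_0/M_k)$, $\widetilde\omega_M=\omega_M+\log(1+t^2)$; for a pre-weight function $\omega$, $\kappa_\omega(t)=\int_1^\infty\omega(ts)s^{-2}ds$, $\varphi^*_\omega(x)=\sup_{y\ge0}(xy-\omega(e^y))$. Derived sequences: $K_j=\exp(\varphi^*_\kappa(j))$ with $\kappa=\kappa_{\widetilde\omega_M}$ replaced by an equivalent normalized (vanishing on $[0,1]$) function; $L_0=1$, $L_k=\min_{0\le j<k}(k/\sum_{\ell\ge k}\mu_\ell^{-1})^{k-j}M_j$; $S_k=\sigma_0\cdots\sigma_k$, $\sigma_0=1$, $\sigma_k=\tau_1k/\tau_k$, $\tau_k=k/\mu_k+\sum_{\ell\ge k}1/\mu_\ell$. *)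

theory Defs
  imports "HOL-Analysis.Analysis"
begin

text \<open>A weight sequence is given by its quotients mu_k; M_k = mu_0 * ... * mu_k.\<close>

definition M_seq :: "(nat \<Rightarrow> real) \<Rightarrow> nat \<Rightarrow> real" where
  "M_seq \<mu> k = (\<Prod>i\<in>{0..k}. \<mu> i)"

definition weight_seq :: "(nat \<Rightarrow> real) \<Rightarrow> bool" where
  "weight_seq \<mu> \<longleftrightarrow> \<mu> 0 = 1 \<and> mono \<mu> \<and> filterlim \<mu> at_top sequentially"

definition non_quasianalytic :: "(nat \<Rightarrow> real) \<Rightarrow> bool" where
  "non_quasianalytic \<mu> \<longleftrightarrow> summable (\<lambda>k. 1 / \<mu> k)"

definition moderate_growth :: "(nat \<Rightarrow> real) \<Rightarrow> bool" where
  "moderate_growth M \<longleftrightarrow> (\<exists>C\<ge>1. \<forall>j k. M (j + k) \<le> C ^ (j + k) * M j * M k)"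

definition seq_equiv :: "(nat \<Rightarrow> real) \<Rightarrow> (nat \<Rightarrow> real) \<Rightarrow> bool" where
  "seq_equiv M N \<longleftrightarrow>
     (\<exists>C. \<forall>k\<ge>1. (M k / N k) powr (1 / real k) \<le> C) \<and>
     (\<exists>C. \<forall>k\<ge>1. (N k / M k) powr (1 / real k) \<le> C)"

definition omega_M :: "(nat \<Rightarrow> real) \<Rightarrow> real \<Rightarrow> real" where
  "omega_M \<mu> t = (if t \<le> 0 then 0
     else (SUP k. ln (t ^ k * M_seq \<mu> 0 / M_seq \<mu> k)))"

definition omega_tilde :: "(nat \<Rightarrow> real) \<Rightarrow> real \<Rightarrow> real" where
  "omega_tilde \<mu> t = omega_M \<mu> t + ln (1 + t\<^sup>2)"

definition kappa :: "(real \<Rightarrow> real) \<Rightarrow> real \<Rightarrow> real" where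
  "kappa \<omega> t = (LINT s:{1..}|lborel. \<omega> (t * s) / s\<^sup>2)"

definition phi_star :: "(real \<Rightarrow> real) \<Rightarrow> real \<Rightarrow> real" where
  "phi_star \<omega> x = (SUP y\<in>{0..}. x * y - \<omega> (exp y))"

definition normalization_of :: "(real \<Rightarrow> real) \<Rightarrow> (real \<Rightarrow> real) \<Rightarrow> bool" where
  "normalization_of \<kappa>' \<kappa> \<longleftrightarrow>
     (\<forall>t\<in>{0..1}. \<kappa>' t = 0) \<and> (\<exists>C. \<forall>t\<ge>0. \<bar>\<kappa>' t - \<kappa> t\<bar> \<le> C)"

definition K_seq :: "(real \<Rightarrow> real) \<Rightarrow> nat \<Rightarrow> real" where
  "K_seq \<kappa>' j = exp (phi_star \<kappa>' (real j))"

definition tail_sum :: "(nat \<Rightarrow> real) \<Rightarrow> nat \<Rightarrow> real" where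
  "tail_sum \<mu> k = (\<Sum>l. 1 / \<mu> (l + k))"

definition L_seq :: "(nat \<Rightarrow> real) \<Rightarrow> nat \<Rightarrow> real" where
  "L_seq \<mu> k = (if k = 0 then 1
     else Min ((\<lambda>j. (real k / tail_sum \<mu> k) ^ (k - j) * M_seq \<mu> j) ` {0..<k}))"

definition tau :: "(nat \<Rightarrow> real) \<Rightarrow> nat \<Rightarrow> real" where
  "tau \<mu> k = real k / \<mu> k + tail_sum \<mu> k"

definition sigma :: "(nat \<Rightarrow> real) \<Rightarrow> nat \<Rightarrow> real" where
  "sigma \<mu> k = (if k = 0 then 1 else tau \<mu> 1 * real k / tau \<mu> k)"

definition S_seq :: "(nat \<Rightarrow> real) \<Rightarrow> nat \<Rightarrow> real" where
  "S_seq \<mu> k = (\<Prod>i\<in>{0..k}. sigma \<mu> i)"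

end

theory Submission
  imports Defs
begin

(* Let T_k be the tail sum of the 1/mu_l from l = k on and nu_k = k / T_k. Each of S, K and L
   agrees with the product nu_1 ... nu_k up to factors c^k and c^-k, and two sequences with this
   property are equivalent.

   Moderate growth enters only through mu_2k <= D mu_k, which gives k <= D mu_k T_k. Then
   T_k <= tau_k <= (D + 1) T_k, so sigma_k / nu_k is bounded above and below. For L, choosing
   j as the number of mu_i <= nu_k with i < k bounds L_k by the product of the 2k / T_i, while
   S_k <= tau_1^k L_k. For K, omega_M(t) is the sum of the ln^+(t / mu_l), so kappa of omega_M is
   the sum of the g(t / mu_l) with g(a) = a for a <= 1 and g(a) = 1 + ln a for a >= 1; the term
   ln (1 + t^2) only adds O(ln t). As a function of ln t this sum is convex with slope the sum of
   the min(1, t / mu_l), which reaches k at t = nu_k, so its Legendre transform at k equals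
   ln (nu_1 ... nu_k) up to O(k). *)

definition log_close :: "(nat \<Rightarrow> real) \<Rightarrow> (nat \<Rightarrow> real) \<Rightarrow> bool" where
  "log_close X P \<longleftrightarrow> (\<forall>k\<ge>1. X k > 0) \<and> (\<exists>a. \<forall>k\<ge>1. \<bar>ln (X k) - P k\<bar> \<le> a * real k)"

lemma seq_equiv_if_log_close:
  assumes "log_close X P" and "log_close Y P"
  shows "seq_equiv X Y"
proof -
  have bounded: "\<exists>C. \<forall>k\<ge>1. (X k / Y k) powr (1 / real k) \<le> C"
    if "log_close X P" and "log_close Y P" for X Y
  proof -
    obtain a where a: "\<And>k. k \<ge> 1 \<Longrightarrow> \<bar>ln (X k) - P k\<bar> \<le> a * real k"
      using \<open>log_close X P\<close> unfolding log_close_def by blast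
    obtain b where b: "\<And>k. k \<ge> 1 \<Longrightarrow> \<bar>ln (Y k) - P k\<bar> \<le> b * real k"
      using \<open>log_close Y P\<close> unfolding log_close_def by blast
    have pos: "\<And>k. k \<ge> 1 \<Longrightarrow> X k > 0 \<and> Y k > 0"
      using that unfolding log_close_def by blast
    show ?thesis
    proof (intro exI allI impI)
      fix k :: nat assume k: "k \<ge> 1"
      have "ln (X k / Y k) \<le> (a + b) * real k"
        using a[OF k] b[OF k] pos[OF k] by (simp add: ln_div algebra_simps)
      then have "ln (X k / Y k) / real k \<le> a + b"
        using k by (simp add: divide_simps)
      then show "(X k / Y k) powr (1 / real k) \<le> exp (a + b)"
        using pos[OF k] by (simp add: powr_def)
    qed
  qed
  show ?thesis
    unfolding seq_equiv_def using bounded assms by blast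
qed

lemma log_close_eventually:
  assumes pos: "\<And>k. k \<ge> 1 \<Longrightarrow> X k > 0"
    and ev: "eventually (\<lambda>k. \<bar>ln (X k) - P k\<bar> \<le> a * real k) sequentially"
  shows "log_close X P"
proof -
  obtain k0 where k0: "\<And>k. k \<ge> k0 \<Longrightarrow> \<bar>ln (X k) - P k\<bar> \<le> a * real k"
    using ev unfolding eventually_sequentially by blast
  define c where "c = (\<Sum>j<k0. \<bar>ln (X j) - P j\<bar>)"
  have "\<bar>ln (X k) - P k\<bar> \<le> max a c * real k" if k: "k \<ge> 1" for k
  proof (cases "k \<ge> k0")
    case True
    have "a * real k \<le> max a c * real k" by (intro mult_right_mono) auto
    then show ?thesis using k0[OF True] by linarith
  next
    case False
    then have "\<bar>ln (X k) - P k\<bar> \<le> c" unfolding c_def by (intro member_le_sum) auto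
    also have "\<dots> \<le> max a c * 1" by simp
    also have "\<dots> \<le> max a c * real k"
      using k \<open>\<bar>ln (X k) - P k\<bar> \<le> c\<close> by (intro mult_left_mono) auto
    finally show ?thesis .
  qed
  then show ?thesis unfolding log_close_def using pos by blast
qed

lemma log_close_prod:
  assumes f: "\<And>i. i \<ge> 1 \<Longrightarrow> f i > 0" and g: "\<And>i. i \<ge> 1 \<Longrightarrow> g i > 0"
    and fg: "\<And>i. i \<ge> 1 \<Longrightarrow> \<bar>ln (f i) - ln (g i)\<bar> \<le> a"
  shows "log_close (\<lambda>k. \<Prod>i=1..k. f i) (\<lambda>k. \<Sum>i=1..k. ln (g i))"
  unfolding log_close_def
proof (intro conjI allI impI exI)
  fix k :: nat
  show "(\<Prod>i=1..k. f i) > 0" using f by (intro prod_pos) auto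
  have "\<bar>ln (\<Prod>i=1..k. f i) - (\<Sum>i=1..k. ln (g i))\<bar> = \<bar>\<Sum>i=1..k. ln (f i) - ln (g i)\<bar>"
    using f by (subst ln_prod) (force simp: sum_subtractf)+
  also have "\<dots> \<le> (\<Sum>i=1..k. \<bar>ln (f i) - ln (g i)\<bar>)" by (rule sum_abs)
  also have "\<dots> \<le> (\<Sum>i=1..k. a)" using fg by (intro sum_mono) auto
  finally show "\<bar>ln (\<Prod>i=1..k. f i) - (\<Sum>i=1..k. ln (g i))\<bar> \<le> a * real k"
    by (simp add: mult.commute)
qed

lemma log_close_squeeze:
  assumes "log_close X P" and pos: "\<And>k. k \<ge> 1 \<Longrightarrow> Y k > 0"
    and XY: "\<And>k. k \<ge> 1 \<Longrightarrow> ln (X k) \<le> ln (Y k) + a * real k"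
    and YP: "\<And>k. k \<ge> 1 \<Longrightarrow> ln (Y k) \<le> P k + b * real k"
  shows "log_close Y P"
proof -
  obtain c where c: "\<And>k. k \<ge> 1 \<Longrightarrow> \<bar>ln (X k) - P k\<bar> \<le> c * real k"
    using \<open>log_close X P\<close> unfolding log_close_def by blast
  have "\<bar>ln (Y k) - P k\<bar> \<le> (\<bar>a\<bar> + \<bar>b\<bar> + c) * real k" if k: "k \<ge> 1" for k
  proof -
    have "0 \<le> c * real k" using c[OF k] by linarith
    moreover have "a * real k \<le> \<bar>a\<bar> * real k" "b * real k \<le> \<bar>b\<bar> * real k"
      by (simp_all add: mult_right_mono)
    moreover have "0 \<le> \<bar>a\<bar> * real k" "0 \<le> \<bar>b\<bar> * real k" by simp_all
    moreover have "(\<bar>a\<bar> + \<bar>b\<bar> + c) * real k = \<bar>a\<bar> * real k + \<bar>b\<bar> * real k + c * real k"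
      by (simp add: algebra_simps)
    ultimately show ?thesis
      using XY[OF k] YP[OF k] c[OF k, unfolded abs_le_iff] by (intro abs_leI) linarith+
  qed
  then show ?thesis unfolding log_close_def using pos by blast
qed

lemma power_div_fact_le_exp:
  fixes x :: real
  assumes "x \<ge> 0"
  shows "x ^ n / fact n \<le> exp x"
proof -
  have "x ^ n / fact n = (\<Sum>m\<in>{n}. x ^ m /\<^sub>R fact m)" by (simp add: divide_inverse mult.commute)
  also have "\<dots> \<le> (\<Sum>m. x ^ m /\<^sub>R fact m)"
    using exp_converges[of x] assms by (intro sum_le_suminf) (auto simp: sums_iff)
  also have "\<dots> = exp x" using exp_converges[of x] by (simp add: sums_iff)
  finally show ?thesis .
qed

lemma sum_ln_div_le: "(\<Sum>i=1..k. ln (real k / real i)) \<le> real k"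
proof (cases "k = 0")
  case False
  have "(\<Sum>i=1..k. ln (real k / real i)) = ln (\<Prod>i=1..k. real k / real i)"
    using False by (subst ln_prod) auto
  also have "(\<Prod>i=1..k. real k / real i) = real k ^ k / fact k"
    by (simp add: prod_dividef fact_prod)
  also have "ln (real k ^ k / fact k) \<le> ln (exp (real k))"
    using False power_div_fact_le_exp[of "real k" k] by (subst ln_le_cancel_iff) auto
  finally show ?thesis by simp
qed simp

lemma mono_threshold_split:
  fixes f :: "nat \<Rightarrow> real"
  assumes "mono f" and "k \<ge> 1"
  obtains j where "j < k" and "\<And>i. 1 \<le> i \<Longrightarrow> i \<le> j \<Longrightarrow> f i \<le> v"
    and "\<And>i. j < i \<Longrightarrow> i < k \<Longrightarrow> v < f i"
  using \<open>k \<ge> 1\<close>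
proof (induction k arbitrary: thesis rule: dec_induct)
  case base
  then show ?case by auto
next
  case (step k)
  obtain j where j: "j < k" "\<And>i. 1 \<le> i \<Longrightarrow> i \<le> j \<Longrightarrow> f i \<le> v"
    "\<And>i. j < i \<Longrightarrow> i < k \<Longrightarrow> v < f i"
    using step.IH by blast
  show ?case
  proof (cases "j + 1 = k \<and> f k \<le> v")
    case True
    then show ?thesis using j by (intro step.prems[of k]) (auto simp: le_Suc_eq)
  next
    case False
    have "v < f k"
    proof (cases "j + 1 = k")
      case False
      then have "v < f (k - 1)" using j step.hyps by auto
      also have "\<dots> \<le> f k" using \<open>mono f\<close> by (simp add: monoD)
      finally show ?thesis .
    qed (use \<open>\<not> (j + 1 = k \<and> f k \<le> v)\<close> in auto)
    then show ?thesis using j by (intro step.prems[of j]) (auto simp: less_Suc_eq)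
  qed
qed

definition ln_plus :: "real \<Rightarrow> real" where
  "ln_plus x = max 0 (ln x)"

(* kappa of ln_plus, see nn_integral_ln_plus_kernel *)
definition kappa_ln_plus :: "real \<Rightarrow> real" where
  "kappa_ln_plus a = (if 1 \<le> a then 1 + ln a else a)"

lemma ln_plus_nonneg: "ln_plus x \<ge> 0"
  unfolding ln_plus_def by simp

lemma ln_plus_le: "x > 0 \<Longrightarrow> ln_plus x \<le> x"
  unfolding ln_plus_def using ln_le_minus_one[of x] by auto

lemma ln_plus_measurable [measurable]: "ln_plus \<in> borel_measurable borel"
  unfolding ln_plus_def[abs_def] by measurable

lemma kappa_ln_plus_nonneg: "a > 0 \<Longrightarrow> kappa_ln_plus a \<ge> 0"
  unfolding kappa_ln_plus_def by auto

lemma kappa_ln_plus_le: "a > 0 \<Longrightarrow> kappa_ln_plus a \<le> a"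
  unfolding kappa_ln_plus_def using ln_le_minus_one[of a] by auto

lemma kappa_ln_plus_le_ln_plus: "kappa_ln_plus a \<le> 1 + ln_plus a"
  unfolding kappa_ln_plus_def ln_plus_def by auto

lemma kappa_ln_plus_eq: "a \<ge> 1 \<Longrightarrow> kappa_ln_plus a = 1 + ln a"
  unfolding kappa_ln_plus_def by simp

lemma ln_plus_kernel_eq:
  fixes a s :: real
  assumes "a > 0"
  shows "indicator {1..} s * ln_plus (a * s) = indicator {max 1 (1 / a)..} s * ln (a * s)"
proof (cases "s \<ge> max 1 (1 / a)")
  case True
  then have "a * s \<ge> 1" using assms by (auto simp: field_simps)
  then show ?thesis using True by (simp add: ln_plus_def)
next
  case False
  then have "s < 1 \<or> a * s < 1" using assms by (auto simp: field_simps)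
  then show ?thesis using False assms by (auto simp: ln_plus_def indicator_def)
qed

lemma nn_integral_ln_plus_kernel:
  fixes a :: real
  assumes a: "a > 0"
  shows "(\<integral>\<^sup>+s. ennreal (ln_plus (a * s) / s\<^sup>2) * indicator {1..} s \<partial>lborel)
    = ennreal (kappa_ln_plus a)"
proof -
  define c where "c = max 1 (1 / a)"
  have c: "c \<ge> 1" "a * c \<ge> 1" unfolding c_def using a by (auto simp: field_simps max_def)
  have "(\<integral>\<^sup>+s. ennreal (ln_plus (a * s) / s\<^sup>2) * indicator {1..} s \<partial>lborel)
      = (\<integral>\<^sup>+s. ennreal (ln (a * s) / s\<^sup>2) * indicator {c..} s \<partial>lborel)"
  proof (intro nn_integral_cong)
    fix s :: real
    have "ennreal (indicator {1..} s * ln_plus (a * s) / s\<^sup>2) = ennreal (indicator {c..} s * ln (a * s) / s\<^sup>2)"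
      using ln_plus_kernel_eq[OF a, of s] unfolding c_def by simp
    then show "ennreal (ln_plus (a * s) / s\<^sup>2) * indicator {1..} s = ennreal (ln (a * s) / s\<^sup>2) * indicator {c..} s"
      using c(1) by (cases "1 \<le> s"; cases "c \<le> s") auto
  qed
  also have "\<dots> = ennreal (0 - (- (1 + ln (a * c)) / c))"
  proof (rule nn_integral_FTC_atLeast)
    fix x assume x: "c \<le> x"
    then have "a * c \<le> a * x" using a by simp
    then have "a * x \<ge> 1" using c by linarith
    then show "0 \<le> ln (a * x) / x\<^sup>2" by simp
    show "((\<lambda>x. - (1 + ln (a * x)) / x) has_real_derivative ln (a * x) / x\<^sup>2) (at x)"
      using x c a by (auto intro!: derivative_eq_intros simp: field_simps power2_eq_square)
  next
    have "((\<lambda>x. - ((1 + ln a) * inverse x + ln x / x)) \<longlongrightarrow> - ((1 + ln a) * 0 + 0)) at_top"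
      by (intro tendsto_minus tendsto_add tendsto_mult tendsto_const ln_x_over_x_tendsto_0
          tendsto_inverse_0_at_top filterlim_ident)
    moreover have "\<forall>\<^sub>F x in at_top. - ((1 + ln a) * inverse x + ln x / x) = - (1 + ln (a * x)) / x"
      using eventually_gt_at_top[of 0]
      by eventually_elim (use a in \<open>auto simp: ln_mult field_simps\<close>)
    ultimately show "((\<lambda>x. - (1 + ln (a * x)) / x) \<longlongrightarrow> 0) at_top"
      by (simp add: tendsto_cong)
  qed measurable
  also have "0 - (- (1 + ln (a * c)) / c) = kappa_ln_plus a"
    using a unfolding c_def kappa_ln_plus_def by (auto simp: max_def field_simps ln_div)
  finally show ?thesis .
qed

lemma kappa_ln_plus_support:
  assumes a: "a > 0" and b: "b > 0"
  shows "kappa_ln_plus a + min 1 a * ln (b / a) \<le> kappa_ln_plus b"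
proof -
  have lnba: "a * ln (b / a) = a * ln b - a * ln a" using a b by (simp add: ln_div algebra_simps)
  show ?thesis
  proof (cases "1 \<le> a")
    case True
    then show ?thesis using ln_le_minus_one[OF b] a b by (simp add: kappa_ln_plus_def ln_div)
  next
    case False
    have "ln (b / a) \<le> b / a - 1" using a b by (intro ln_le_minus_one) auto
    then have lin: "a + a * ln (b / a) \<le> b" using a by (simp add: field_simps)
    have "ln (1 / a) \<le> 1 / a - 1" using a by (intro ln_le_minus_one) auto
    then have "- a * ln a \<le> 1 - a" using a by (simp add: ln_div field_simps)
    moreover have "(1 - a) * ln b \<ge> 0" if "1 \<le> b" using False that by simp
    ultimately have "a + a * ln (b / a) \<le> 1 + ln b" if "1 \<le> b"
      using that unfolding lnba by (simp add: algebra_simps)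
    then show ?thesis using False lin by (simp add: kappa_ln_plus_def)
  qed
qed

lemma kappa_eq_enn2real:
  assumes [measurable]: "f \<in> borel_measurable borel" and nonneg: "\<And>s. s \<ge> 1 \<Longrightarrow> f (t * s) \<ge> 0"
  shows "kappa f t = enn2real (\<integral>\<^sup>+s. ennreal (f (t * s) / s\<^sup>2) * indicator {1..} s \<partial>lborel)"
proof -
  have "kappa f t = integral\<^sup>L lborel (\<lambda>s. indicator {1..} s *\<^sub>R (f (t * s) / s\<^sup>2))"
    unfolding kappa_def set_lebesgue_integral_def ..
  also have "\<dots> = enn2real (\<integral>\<^sup>+s. ennreal (indicator {1..} s *\<^sub>R (f (t * s) / s\<^sup>2)) \<partial>lborel)"
    using nonneg by (intro integral_eq_nn_integral AE_I2) (auto simp: indicator_def)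
  also have "(\<integral>\<^sup>+s. ennreal (indicator {1..} s *\<^sub>R (f (t * s) / s\<^sup>2)) \<partial>lborel)
      = (\<integral>\<^sup>+s. ennreal (f (t * s) / s\<^sup>2) * indicator {1..} s \<partial>lborel)"
    by (intro nn_integral_cong) (simp add: indicator_def)
  finally show ?thesis .
qed

lemma nn_integral_ln_one_plus_square_kernel_le:
  fixes t :: real
  assumes "t \<ge> 1"
  shows "(\<integral>\<^sup>+s. ennreal (ln (1 + (t * s)\<^sup>2) / s\<^sup>2) * indicator {1..} s \<partial>lborel)
    \<le> 2 * ennreal (kappa_ln_plus (2 * t))"
proof -
  have "ennreal (ln (1 + (t * s)\<^sup>2) / s\<^sup>2) * indicator {1..} s
      \<le> 2 * (ennreal (ln_plus ((2 * t) * s) / s\<^sup>2) * indicator {1..} s)" for s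
  proof (cases "s \<ge> 1")
    case True
    then have "t * s \<ge> 1" using assms mult_mono[of 1 t 1 s] by simp
    then have "1 \<le> (t * s)\<^sup>2" by (simp add: one_le_power)
    moreover have "(2 * t * s)\<^sup>2 = 4 * (t * s)\<^sup>2" by (simp add: power2_eq_square)
    ultimately have "1 + (t * s)\<^sup>2 \<le> (2 * t * s)\<^sup>2" by linarith
    then have "ln (1 + (t * s)\<^sup>2) \<le> ln ((2 * t * s)\<^sup>2)"
      by (intro ln_mono) (auto intro: add_pos_nonneg)
    also have "\<dots> = 2 * ln (2 * t * s)"
      using \<open>t * s \<ge> 1\<close> by (simp add: ln_realpow)
    also have "\<dots> \<le> 2 * ln_plus (2 * t * s)" unfolding ln_plus_def by simp
    finally have "ln (1 + (t * s)\<^sup>2) / s\<^sup>2 \<le> 2 * (ln_plus (2 * t * s) / s\<^sup>2)"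
      by (simp add: divide_right_mono)
    then have "ennreal (ln (1 + (t * s)\<^sup>2) / s\<^sup>2) \<le> ennreal (2 * (ln_plus (2 * t * s) / s\<^sup>2))"
      by (rule ennreal_leI)
    also have "\<dots> = 2 * ennreal (ln_plus (2 * t * s) / s\<^sup>2)"
      using ennreal_mult[of 2 "ln_plus (2 * t * s) / s\<^sup>2"] ln_plus_nonneg[of "2 * t * s"] by simp
    finally show ?thesis using True by simp
  qed simp
  then have "(\<integral>\<^sup>+s. ennreal (ln (1 + (t * s)\<^sup>2) / s\<^sup>2) * indicator {1..} s \<partial>lborel)
      \<le> (\<integral>\<^sup>+s. 2 * (ennreal (ln_plus ((2 * t) * s) / s\<^sup>2) * indicator {1..} s) \<partial>lborel)"
    by (intro nn_integral_mono)
  also have "\<dots> = 2 * ennreal (kappa_ln_plus (2 * t))"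
    using assms by (simp add: nn_integral_cmult nn_integral_ln_plus_kernel)
  finally show ?thesis .
qed

locale weight_sequence =
  fixes \<mu> :: "nat \<Rightarrow> real"
  assumes weight: "weight_seq \<mu>"
begin

lemma mu_0: "\<mu> 0 = 1"
  using weight by (simp add: weight_seq_def)

lemma mono_mu: "mono \<mu>"
  using weight by (simp add: weight_seq_def)

lemma mu_mono: "i \<le> j \<Longrightarrow> \<mu> i \<le> \<mu> j"
  using mono_mu by (simp add: monoD)

lemma mu_ge_1: "\<mu> i \<ge> 1"
  using mu_mono[of 0 i] mu_0 by simp

lemma mu_pos: "\<mu> i > 0"
  using mu_ge_1[of i] by simp

lemma mu_nonzero [simp]: "\<mu> i \<noteq> 0"
  using mu_pos[of i] by simp

lemma mu_unbounded: "\<exists>n. u < \<mu> n"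
proof -
  have "\<forall>\<^sub>F n in sequentially. u < \<mu> n"
    using weight by (simp add: weight_seq_def filterlim_at_top_dense)
  then show ?thesis by (auto simp: eventually_sequentially)
qed

abbreviation M where "M \<equiv> M_seq \<mu>"

lemma M_seq_eq_prod: "M k = (\<Prod>i=1..k. \<mu> i)"
  unfolding M_seq_def using prod.atLeast_Suc_atMost[of 0 k \<mu>] mu_0
  by (cases k) (auto simp: atLeastSucAtMost_greaterThanAtMost)

lemma M_seq_0: "M 0 = 1"
  unfolding M_seq_def by (simp add: mu_0)

lemma M_seq_pos: "M k > 0"
  unfolding M_seq_def by (auto intro: prod_pos mu_pos)

lemma ln_M_seq: "ln (M k) = (\<Sum>i=1..k. ln (\<mu> i))"
  unfolding M_seq_eq_prod using mu_pos by (subst ln_prod) (auto simp: less_imp_neq[symmetric])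

lemma M_seq_le_power: "M k \<le> \<mu> k ^ k"
proof -
  have "M k \<le> (\<Prod>i=1..k. \<mu> k)"
    unfolding M_seq_eq_prod by (intro prod_mono) (auto simp: mu_mono less_imp_le[OF mu_pos])
  then show ?thesis by simp
qed

lemma M_seq_add_ge: "\<mu> a ^ b * M a \<le> M (a + b)"
proof (induction b)
  case (Suc b)
  have "\<mu> a ^ Suc b * M a = \<mu> a * (\<mu> a ^ b * M a)" by simp
  also have "\<dots> \<le> \<mu> (a + Suc b) * M (a + b)"
    using Suc mu_mono[of a "a + Suc b"] mu_pos[of a] M_seq_pos[of a] by (intro mult_mono) auto
  also have "\<dots> = M (a + Suc b)" by (simp add: M_seq_def)
  finally show ?case .
qed simp

lemma doubling_if_moderate_growth:
  assumes "moderate_growth M"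
  shows "\<exists>D\<ge>1. \<forall>k. \<mu> (2 * k) \<le> D * \<mu> k"
proof -
  obtain C where C: "C \<ge> 1" "\<And>j k. M (j + k) \<le> C ^ (j + k) * M j * M k"
    using assms unfolding moderate_growth_def by blast
  have "\<mu> (2 * k) \<le> C ^ 3 * \<mu> k" for k
  proof (cases "k = 0")
    case False
    have "\<mu> (2 * k) ^ (2 * k) * M (2 * k) \<le> C ^ (4 * k) * M (2 * k) * M (2 * k)"
      using M_seq_add_ge[of "2 * k" "2 * k"] C(2)[of "2 * k" "2 * k"] by simp
    then have "\<mu> (2 * k) ^ (2 * k) \<le> C ^ (4 * k) * M (2 * k)"
      using M_seq_pos[of "2 * k"] by (simp add: mult_ac)
    also have "\<dots> \<le> C ^ (4 * k) * (C ^ (2 * k) * M k * M k)"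
      using C(2)[of k k] C(1) by (intro mult_left_mono) (auto simp: mult_2)
    also have "\<dots> \<le> C ^ (4 * k) * (C ^ (2 * k) * \<mu> k ^ k * \<mu> k ^ k)"
    proof -
      have "M k * M k \<le> \<mu> k ^ k * \<mu> k ^ k"
        using M_seq_le_power[of k] M_seq_pos[of k] by (intro mult_mono) auto
      then show ?thesis using C(1) by (simp add: mult.assoc)
    qed
    also have "\<dots> = (C ^ 3 * \<mu> k) ^ (2 * k)"
    proof -
      have "C ^ (4 * k) * C ^ (2 * k) = C ^ (3 * (2 * k))"
        unfolding power_add[symmetric] by simp
      then have "C ^ (4 * k) * C ^ (2 * k) = (C ^ 3) ^ (2 * k)"
        by (simp only: power_mult)
      moreover have "\<mu> k ^ k * \<mu> k ^ k = \<mu> k ^ (2 * k)"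
        by (simp only: mult_2 power_add)
      ultimately show ?thesis by (simp add: power_mult_distrib mult.assoc)
    qed
    finally have "\<mu> (2 * k) ^ (2 * k) \<le> (C ^ 3 * \<mu> k) ^ (2 * k)" .
    then show ?thesis
      using False C(1) mu_pos[of k] mu_pos[of "2 * k"] by (simp add: power_mono_iff)
  qed (use C(1) mu_0 one_le_power in auto)
  moreover have "C ^ 3 \<ge> 1" using C(1) by (rule one_le_power)
  ultimately show ?thesis by blast
qed

end

locale nonquasianalytic_weight = weight_sequence +
  assumes nonqa: "non_quasianalytic \<mu>"
begin

lemma summable_inverse_mu_shift: "summable (\<lambda>l. 1 / \<mu> (l + k))"
  using nonqa summable_iff_shift[of "\<lambda>k. 1 / \<mu> k" k] by (simp add: non_quasianalytic_def)

abbreviation T where "T \<equiv> tail_sum \<mu>"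

lemma tail_sum_ge_partial: "(\<Sum>l<n. 1 / \<mu> (l + k)) \<le> T k"
  unfolding tail_sum_def
  by (rule sum_le_suminf[OF summable_inverse_mu_shift]) (auto intro: less_imp_le mu_pos)

lemma tail_sum_pos: "T k > 0"
proof -
  have "0 < 1 / \<mu> k" using mu_pos[of k] by simp
  also have "\<dots> \<le> T k" using tail_sum_ge_partial[where n=1 and k=k] by simp
  finally show ?thesis .
qed

lemma tail_sum_split:
  assumes "i \<le> k"
  shows "T i = (\<Sum>l\<in>{i..<k}. 1 / \<mu> l) + T k"
proof -
  obtain d where k: "k = i + d" using assms le_Suc_ex by blast
  have "T i = (\<Sum>n. 1 / \<mu> (n + d + i)) + (\<Sum>l<d. 1 / \<mu> (l + i))"
    unfolding tail_sum_def
    using suminf_split_initial_segment[OF summable_inverse_mu_shift[of i], of d]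
    by (simp add: add.assoc)
  also have "(\<Sum>l<d. 1 / \<mu> (l + i)) = (\<Sum>l\<in>{i..<k}. 1 / \<mu> l)"
    unfolding k by (rule sum.reindex_bij_witness[where i="\<lambda>l. l - i" and j="\<lambda>l. l + i"]) auto
  also have "(\<Sum>n. 1 / \<mu> (n + d + i)) = T k"
    unfolding tail_sum_def k by (simp add: add_ac)
  finally show ?thesis by simp
qed

lemma tail_sum_antimono: "i \<le> k \<Longrightarrow> T k \<le> T i"
  using tail_sum_split[of i k] mu_pos by (auto intro!: sum_nonneg simp: less_imp_le)

lemma tail_sum_diff_le:
  assumes "i \<le> k"
  shows "T i \<le> T k + real (k - i) / \<mu> i"
proof -
  have "(\<Sum>l\<in>{i..<k}. 1 / \<mu> l) \<le> (\<Sum>l\<in>{i..<k}. 1 / \<mu> i)"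
    by (intro sum_mono divide_left_mono) (auto simp: mu_mono mu_pos)
  then show ?thesis using tail_sum_split[OF assms] by simp
qed

lemma tail_sum_ge_block: "real n / \<mu> (k + n) \<le> T k"
proof -
  have "real n / \<mu> (k + n) = (\<Sum>l<n. 1 / \<mu> (k + n))" by simp
  also have "\<dots> \<le> (\<Sum>l<n. 1 / \<mu> (l + k))"
    by (intro sum_mono divide_left_mono) (auto simp: mu_mono mu_pos)
  also have "\<dots> \<le> T k" by (rule tail_sum_ge_partial)
  finally show ?thesis .
qed

definition nu :: "nat \<Rightarrow> real" where
  "nu k = real k / T k"

definition log_nu_prod :: "nat \<Rightarrow> real" where
  "log_nu_prod k = (\<Sum>i=1..k. ln (nu i))"

lemma nu_pos: "k \<ge> 1 \<Longrightarrow> nu k > 0"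
  unfolding nu_def using tail_sum_pos[of k] by simp

lemma nu_mult_tail_sum: "nu k * T k = real k"
  unfolding nu_def using tail_sum_pos[of k] by simp

lemma nu_mono: "i \<le> k \<Longrightarrow> nu i \<le> nu k"
  unfolding nu_def using tail_sum_antimono[of i k] tail_sum_pos[of k] by (intro frac_le) auto

lemma one_le_nu: "k \<ge> 1 \<Longrightarrow> T 1 \<le> real k \<Longrightarrow> 1 \<le> nu k"
  unfolding nu_def using tail_sum_antimono[of 1 k] tail_sum_pos[of k] by simp

lemma log_nu_prod_Suc: "log_nu_prod (Suc k) = log_nu_prod k + ln (nu (Suc k))"
  unfolding log_nu_prod_def by simp

lemma tau_pos: "tau \<mu> k > 0"
  unfolding tau_def using tail_sum_pos[of k] mu_pos[of k] by (simp add: add_nonneg_pos)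

lemma tail_sum_le_tau: "T k \<le> tau \<mu> k"
  unfolding tau_def using mu_pos[of k] by simp

lemma sigma_pos: "sigma \<mu> k > 0"
  unfolding sigma_def using tau_pos[of 1] tau_pos[of k] by simp

lemma sigma_eq_nu: "k \<ge> 1 \<Longrightarrow> sigma \<mu> k = tau \<mu> 1 * (T k / tau \<mu> k) * nu k"
  unfolding sigma_def nu_def using tail_sum_pos[of k] by simp

lemma sigma_le_nu:
  assumes "k \<ge> 1"
  shows "sigma \<mu> k \<le> tau \<mu> 1 * nu k"
proof -
  have "T k / tau \<mu> k \<le> 1" using tail_sum_le_tau[of k] tau_pos[of k] by simp
  then have "tau \<mu> 1 * (T k / tau \<mu> k) * nu k \<le> tau \<mu> 1 * 1 * nu k"
    using tau_pos[of 1] nu_pos[OF assms] by (intro mult_right_mono mult_left_mono) auto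
  then show ?thesis using sigma_eq_nu[OF assms] by simp
qed

lemma sigma_le_mu: "k \<ge> 1 \<Longrightarrow> sigma \<mu> k \<le> tau \<mu> 1 * \<mu> k"
proof -
  assume "k \<ge> 1"
  have "real k \<le> \<mu> k * tau \<mu> k"
    unfolding tau_def using tail_sum_pos[of k] mu_pos[of k] by (simp add: field_simps)
  then have "real k / tau \<mu> k \<le> \<mu> k" using tau_pos[of k] by (simp add: divide_simps)
  then show ?thesis
    unfolding sigma_def using \<open>k \<ge> 1\<close> tau_pos[of 1] mult_left_mono by fastforce
qed

lemma S_seq_eq_prod: "S_seq \<mu> k = (\<Prod>i=1..k. sigma \<mu> i)"
  unfolding S_seq_def using prod.atLeast_Suc_atMost[of 0 k "sigma \<mu>"]
  by (cases k) (auto simp: sigma_def atLeastSucAtMost_greaterThanAtMost)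

lemma L_seq_le: "j < k \<Longrightarrow> L_seq \<mu> k \<le> nu k ^ (k - j) * M j"
  unfolding L_seq_def nu_def by (auto intro: Min_le)

lemma L_seq_pos: "L_seq \<mu> k > 0"
  unfolding L_seq_def nu_def[symmetric] using nu_pos M_seq_pos by (auto simp: Min_gr_iff)

lemma S_seq_le_L_seq: "S_seq \<mu> k \<le> tau \<mu> 1 ^ k * L_seq \<mu> k"
proof (cases "k = 0")
  case False
  have "S_seq \<mu> k \<le> tau \<mu> 1 ^ k * (nu k ^ (k - j) * M j)" if j: "j < k" for j
  proof -
    have split: "{1..k} = {1..j} \<union> {j<..k}" using j by auto
    have "S_seq \<mu> k = (\<Prod>i=1..j. sigma \<mu> i) * (\<Prod>i\<in>{j<..k}. sigma \<mu> i)"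
      unfolding S_seq_eq_prod split by (rule prod.union_disjoint) auto
    also have "\<dots> \<le> (\<Prod>i=1..j. tau \<mu> 1 * \<mu> i) * (\<Prod>i\<in>{j<..k}. tau \<mu> 1 * nu k)"
    proof (rule mult_mono)
      show "(\<Prod>i=1..j. sigma \<mu> i) \<le> (\<Prod>i=1..j. tau \<mu> 1 * \<mu> i)"
        using sigma_le_mu sigma_pos by (intro prod_mono) (simp add: less_imp_le)
      have "sigma \<mu> i \<le> tau \<mu> 1 * nu k" if i: "i \<in> {j<..k}" for i
      proof -
        have "sigma \<mu> i \<le> tau \<mu> 1 * nu i" using i by (intro sigma_le_nu) auto
        also have "\<dots> \<le> tau \<mu> 1 * nu k"
          using i nu_mono[of i k] tau_pos[of 1] by (intro mult_left_mono) auto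
        finally show ?thesis .
      qed
      then show "(\<Prod>i\<in>{j<..k}. sigma \<mu> i) \<le> (\<Prod>i\<in>{j<..k}. tau \<mu> 1 * nu k)"
        using sigma_pos by (intro prod_mono) (simp add: less_imp_le)
    qed (use sigma_pos tau_pos mu_pos in \<open>auto intro!: prod_nonneg simp: less_imp_le\<close>)
    also have "\<dots> = tau \<mu> 1 ^ k * (nu k ^ (k - j) * M j)"
      using j by (simp add: prod.distrib M_seq_eq_prod power_mult_distrib power_add[symmetric] mult_ac)
    finally show ?thesis .
  qed
  then have "S_seq \<mu> k / tau \<mu> 1 ^ k \<le> L_seq \<mu> k"
    using False tau_pos[of 1] unfolding L_seq_def nu_def
    by (auto simp: Min_ge_iff pos_divide_le_eq mult.commute)
  then show ?thesis using tau_pos[of 1] by (simp add: pos_divide_le_eq mult.commute)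
qed (simp add: S_seq_def L_seq_def sigma_def)

lemma min_mu_nu_mult_tail_sum_le:
  assumes "i \<le> k"
  shows "min (\<mu> i) (nu k) * T i \<le> 2 * real k"
proof -
  define m where "m = min (\<mu> i) (nu k)"
  have "m \<ge> 0" unfolding m_def nu_def using mu_pos[of i] tail_sum_pos[of k] by simp
  have "m * T i \<le> m * T k + m * (real (k - i) / \<mu> i)"
    using mult_left_mono[OF tail_sum_diff_le[OF assms] \<open>m \<ge> 0\<close>] by (simp add: distrib_left)
  also have "m * T k \<le> real k"
    using mult_right_mono[OF min.cobounded2[of "\<mu> i" "nu k"] less_imp_le[OF tail_sum_pos[of k]]]
      nu_mult_tail_sum[of k]
    unfolding m_def by simp
  also have "m * (real (k - i) / \<mu> i) = (m / \<mu> i) * real (k - i)" by simp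
  also have "\<dots> \<le> 1 * real k"
    using mu_pos[of i] \<open>m \<ge> 0\<close> unfolding m_def by (intro mult_mono) auto
  finally show ?thesis unfolding m_def by simp
qed

lemma L_seq_le_prod:
  assumes "k \<ge> 1"
  shows "L_seq \<mu> k \<le> (\<Prod>i=1..k. 2 * real k / T i)"
proof -
  obtain j where "j < k" and low: "\<And>i. 1 \<le> i \<Longrightarrow> i \<le> j \<Longrightarrow> \<mu> i \<le> nu k"
    and high: "\<And>i. j < i \<Longrightarrow> i < k \<Longrightarrow> nu k < \<mu> i"
    using mono_threshold_split[OF mono_mu assms] by blast
  define f where "f i = (if i \<le> j then \<mu> i else nu k)" for i
  have "nu k ^ (k - j) * M j = (\<Prod>i=1..k. f i)"
  proof -
    have "{1..k} \<inter> {i. i \<le> j} = {1..j}" "{1..k} \<inter> - {i. i \<le> j} = {j<..k}"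
      using \<open>j < k\<close> by auto
    then show ?thesis
      unfolding f_def prod.If_cases[OF finite_atLeastAtMost] M_seq_eq_prod by simp
  qed
  also have "\<dots> \<le> (\<Prod>i=1..k. 2 * real k / T i)"
  proof (rule prod_mono)
    fix i assume i: "i \<in> {1..k}"
    have "f i = min (\<mu> i) (nu k) \<or> i = k"
      using low[of i] high[of i] i unfolding f_def by (cases "i \<le> j"; cases "i = k") auto
    then have "f i * T i \<le> 2 * real k"
      using min_mu_nu_mult_tail_sum_le[of i k] nu_mult_tail_sum[of k] i \<open>j < k\<close>
      unfolding f_def by auto
    moreover have "f i \<ge> 0"
      unfolding f_def using mu_pos[of i] nu_pos[OF assms] by simp
    ultimately show "0 \<le> f i \<and> f i \<le> 2 * real k / T i"
      using tail_sum_pos[of i] by (simp add: pos_le_divide_eq)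
  qed
  finally show ?thesis using L_seq_le[OF \<open>j < k\<close>] by linarith
qed

lemma ln_L_seq_le:
  assumes "k \<ge> 1"
  shows "ln (L_seq \<mu> k) \<le> log_nu_prod k + (1 + ln 2) * real k"
proof -
  have ln_term: "ln (2 * real k / T i) = ln 2 + ln (real k / real i) + ln (nu i)"
    if "i \<in> {1..k}" for i
  proof -
    have "2 * real k / T i = 2 * (real k / real i) * nu i"
      using that tail_sum_pos[of i] unfolding nu_def by auto
    moreover have "real k / real i > 0" using that by auto
    ultimately show ?thesis using that nu_pos[of i] by (simp only: ln_mult) auto
  qed
  have "ln (L_seq \<mu> k) \<le> ln (\<Prod>i=1..k. 2 * real k / T i)"
    using L_seq_le_prod[OF assms] L_seq_pos by (intro ln_mono) auto
  also have "\<dots> = (\<Sum>i=1..k. ln 2 + ln (real k / real i) + ln (nu i))"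
    using tail_sum_pos by (subst ln_prod) (auto simp: ln_term less_imp_neq[symmetric] intro!: sum.cong)
  also have "\<dots> \<le> real k * ln 2 + real k + log_nu_prod k"
    using sum_ln_div_le[of k] by (simp add: sum.distrib log_nu_prod_def)
  finally show ?thesis by (simp add: algebra_simps)
qed

definition omega_series :: "real \<Rightarrow> real" where
  "omega_series u = (\<Sum>l. ln_plus (u / \<mu> (Suc l)))"

definition kappa_series :: "real \<Rightarrow> real" where
  "kappa_series t = (\<Sum>l. kappa_ln_plus (t / \<mu> (Suc l)))"

definition kappa_slope :: "real \<Rightarrow> real" where
  "kappa_slope s = (\<Sum>l. min 1 (s / \<mu> (Suc l)))"

lemma summable_dominated_by_inverse_mu:
  assumes "\<And>l. \<bar>f l\<bar> \<le> c / \<mu> (Suc l)"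
  shows "summable f"
proof (rule summable_comparison_test')
  show "summable (\<lambda>l. c * (1 / \<mu> (l + 1)))"
    by (intro summable_mult summable_inverse_mu_shift)
qed (use assms in simp)

lemma summable_omega_series: "u > 0 \<Longrightarrow> summable (\<lambda>l. ln_plus (u / \<mu> (Suc l)))"
  by (rule summable_dominated_by_inverse_mu[where c=u])
     (simp add: ln_plus_nonneg ln_plus_le mu_pos)

lemma summable_kappa_series: "t > 0 \<Longrightarrow> summable (\<lambda>l. kappa_ln_plus (t / \<mu> (Suc l)))"
  by (rule summable_dominated_by_inverse_mu[where c=t])
     (simp add: kappa_ln_plus_nonneg kappa_ln_plus_le mu_pos)

lemma summable_kappa_slope:
  assumes "s > 0"
  shows "summable (\<lambda>l. min 1 (s / \<mu> (Suc l)))"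
proof -
  have "\<bar>min 1 (s / \<mu> (Suc l))\<bar> \<le> s / \<mu> (Suc l)" for l
    using assms mu_pos[of "Suc l"] by (simp add: abs_of_nonneg)
  then show ?thesis by (rule summable_dominated_by_inverse_mu)
qed

lemma omega_series_nonneg: "u > 0 \<Longrightarrow> omega_series u \<ge> 0"
  unfolding omega_series_def by (intro suminf_nonneg summable_omega_series ln_plus_nonneg)

lemma kappa_series_nonneg: "t > 0 \<Longrightarrow> kappa_series t \<ge> 0"
  unfolding kappa_series_def using mu_pos
  by (intro suminf_nonneg summable_kappa_series kappa_ln_plus_nonneg) auto

lemma ln_power_div_M_seq:
  assumes "u > 0"
  shows "ln (u ^ k * M 0 / M k) = (\<Sum>i=1..k. ln (u / \<mu> i))"
proof -
  have "ln (u ^ k * M 0 / M k) = real k * ln u - ln (M k)"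
    using assms M_seq_pos[of k] by (simp add: M_seq_0 ln_div ln_realpow)
  also have "\<dots> = (\<Sum>i=1..k. ln u - ln (\<mu> i))"
    by (simp add: ln_M_seq sum_subtractf)
  also have "\<dots> = (\<Sum>i=1..k. ln (u / \<mu> i))"
    using assms mu_pos by (simp add: ln_div)
  finally show ?thesis .
qed

lemma omega_M_eq_omega_series:
  assumes u: "u > 0"
  shows "omega_M \<mu> u = omega_series u"
proof -
  obtain n where n: "u < \<mu> n" using mu_unbounded by blast
  obtain j where low: "\<And>i. 1 \<le> i \<Longrightarrow> i \<le> j \<Longrightarrow> \<mu> i \<le> u"
    and below_n: "\<And>i. j < i \<Longrightarrow> i < Suc n \<Longrightarrow> u < \<mu> i"
    by (rule mono_threshold_split[OF mono_mu, of "Suc n" u]) auto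
  have high: "u < \<mu> i" if "j < i" for i
    using below_n[OF that] n mu_mono[of n i] by (cases "i \<le> n") auto
  have "omega_series u = (\<Sum>l<j. ln_plus (u / \<mu> (Suc l)))"
    unfolding omega_series_def
    by (rule suminf_finite) (use high mu_pos u in \<open>auto simp: ln_plus_def\<close>)
  also have "\<dots> = (\<Sum>i=1..j. ln (u / \<mu> i))"
    using low mu_pos u by (auto simp: sum.atLeast1_atMost_eq ln_plus_def intro!: sum.cong)
  finally have attained: "omega_series u = ln (u ^ j * M 0 / M j)"
    using ln_power_div_M_seq[OF u] by simp
  have "ln (u ^ k * M 0 / M k) \<le> omega_series u" for k
  proof -
    have "ln (u ^ k * M 0 / M k) \<le> (\<Sum>i=1..k. ln_plus (u / \<mu> i))"
      unfolding ln_power_div_M_seq[OF u] by (intro sum_mono) (simp add: ln_plus_def)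
    also have "\<dots> = (\<Sum>l<k. ln_plus (u / \<mu> (Suc l)))"
      by (simp add: sum.atLeast1_atMost_eq)
    also have "\<dots> \<le> omega_series u"
      unfolding omega_series_def
      using u by (intro sum_le_suminf summable_omega_series) (auto simp: ln_plus_nonneg)
    finally show ?thesis .
  qed
  then have "(SUP k. ln (u ^ k * M 0 / M k)) = omega_series u"
    by (intro cSup_eq_maximum) (auto simp: attained)
  then show ?thesis unfolding omega_M_def using u by simp
qed

lemma omega_M_nonneg: "omega_M \<mu> u \<ge> 0"
  using omega_M_eq_omega_series[of u] omega_series_nonneg[of u] by (cases "u > 0") (auto simp: omega_M_def)

lemma mono_omega_M: "mono (omega_M \<mu>)"
proof (rule monoI)
  fix u v :: real assume "u \<le> v"
  show "omega_M \<mu> u \<le> omega_M \<mu> v"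
  proof (cases "u > 0")
    case True
    have "ln_plus (u / \<mu> (Suc l)) \<le> ln_plus (v / \<mu> (Suc l))" for l
      using True \<open>u \<le> v\<close> mu_pos[of "Suc l"] unfolding ln_plus_def
      by (intro max.mono order_refl ln_mono divide_right_mono) auto
    then have "omega_series u \<le> omega_series v"
      unfolding omega_series_def using True \<open>u \<le> v\<close>
      by (intro suminf_le summable_omega_series) auto
    then show ?thesis using True \<open>u \<le> v\<close> by (simp add: omega_M_eq_omega_series)
  qed (use omega_M_nonneg in \<open>simp add: omega_M_def\<close>)
qed

lemma omega_M_measurable [measurable]: "omega_M \<mu> \<in> borel_measurable borel"
  using mono_omega_M by (rule borel_measurable_mono)

lemma omega_tilde_measurable [measurable]: "omega_tilde \<mu> \<in> borel_measurable borel"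
  unfolding omega_tilde_def[abs_def] by measurable

lemma nn_integral_omega_M_kernel:
  assumes t: "t > 0"
  shows "(\<integral>\<^sup>+s. ennreal (omega_M \<mu> (t * s) / s\<^sup>2) * indicator {1..} s \<partial>lborel)
    = ennreal (kappa_series t)"
proof -
  have termwise: "ennreal (omega_M \<mu> (t * s) / s\<^sup>2) * indicator {1..} s
      = (\<Sum>l. ennreal (ln_plus ((t / \<mu> (Suc l)) * s) / s\<^sup>2) * indicator {1..} s)" for s
  proof (cases "s \<ge> 1")
    case True
    then have ts: "t * s > 0" using t by simp
    have "(\<Sum>l. ennreal (ln_plus (t * s / \<mu> (Suc l)) / s\<^sup>2))
        = ennreal (\<Sum>l. ln_plus (t * s / \<mu> (Suc l)) / s\<^sup>2)"
      by (intro suminf_ennreal2 summable_divide summable_omega_series ts) (simp add: ln_plus_nonneg)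
    also have "(\<Sum>l. ln_plus (t * s / \<mu> (Suc l)) / s\<^sup>2) = omega_M \<mu> (t * s) / s\<^sup>2"
      using omega_M_eq_omega_series[OF ts] suminf_divide[OF summable_omega_series[OF ts]]
      unfolding omega_series_def by simp
    finally show ?thesis using True by simp
  qed simp
  have "(\<integral>\<^sup>+s. ennreal (omega_M \<mu> (t * s) / s\<^sup>2) * indicator {1..} s \<partial>lborel)
      = (\<Sum>l. \<integral>\<^sup>+s. ennreal (ln_plus ((t / \<mu> (Suc l)) * s) / s\<^sup>2) * indicator {1..} s \<partial>lborel)"
    unfolding termwise by (rule nn_integral_suminf) measurable
  also have "\<dots> = (\<Sum>l. ennreal (kappa_ln_plus (t / \<mu> (Suc l))))"
    using t mu_pos by (intro suminf_cong nn_integral_ln_plus_kernel) simp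
  also have "\<dots> = ennreal (kappa_series t)"
    unfolding kappa_series_def using t mu_pos
    by (intro suminf_ennreal2 summable_kappa_series kappa_ln_plus_nonneg) auto
  finally show ?thesis .
qed

lemma kappa_omega_tilde_bounds:
  assumes t: "t \<ge> 1"
  shows "kappa_series t \<le> kappa (omega_tilde \<mu>) t"
    and "kappa (omega_tilde \<mu>) t \<le> kappa_series t + 2 * kappa_ln_plus (2 * t)"
proof -
  define J where "J = (\<integral>\<^sup>+s. ennreal (ln (1 + (t * s)\<^sup>2) / s\<^sup>2) * indicator {1..} s \<partial>lborel)"
  have J_le: "J \<le> ennreal (2 * kappa_ln_plus (2 * t))"
    unfolding J_def using nn_integral_ln_one_plus_square_kernel_le[OF t] t
    by (simp add: ennreal_mult' kappa_ln_plus_nonneg)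
  moreover have "J < top" using J_le by (simp add: le_less_trans)
  then obtain r where "J = ennreal r" "0 \<le> r" by (cases J) auto
  ultimately have J: "J = ennreal r" "0 \<le> r" "r \<le> 2 * kappa_ln_plus (2 * t)"
    using t kappa_ln_plus_nonneg[of "2 * t"] by (auto simp: ennreal_le_iff)
  define I where "I = (\<integral>\<^sup>+s. ennreal (omega_tilde \<mu> (t * s) / s\<^sup>2) * indicator {1..} s \<partial>lborel)"
  have "I = (\<integral>\<^sup>+s. ennreal (omega_M \<mu> (t * s) / s\<^sup>2) * indicator {1..} s
               + ennreal (ln (1 + (t * s)\<^sup>2) / s\<^sup>2) * indicator {1..} s \<partial>lborel)"
    unfolding I_def by (intro nn_integral_cong)
       (simp add: omega_tilde_def add_divide_distrib omega_M_nonneg indicator_def)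
  also have "\<dots> = ennreal (kappa_series t) + J"
    unfolding J_def using t
    by (subst nn_integral_add) (auto simp: nn_integral_omega_M_kernel)
  finally have I: "I = ennreal (kappa_series t + r)"
    using J kappa_series_nonneg[of t] t by simp
  have "kappa (omega_tilde \<mu>) t = enn2real I"
    unfolding I_def by (rule kappa_eq_enn2real) (auto simp: omega_tilde_def omega_M_nonneg)
  then have "kappa (omega_tilde \<mu>) t = kappa_series t + r"
    unfolding I using J(2) kappa_series_nonneg[of t] t by (simp del: ennreal_plus)
  then show "kappa_series t \<le> kappa (omega_tilde \<mu>) t"
    and "kappa (omega_tilde \<mu>) t \<le> kappa_series t + 2 * kappa_ln_plus (2 * t)"
    using J by auto
qed

lemma kappa_series_support:
  assumes s: "s > 0" and t: "t > 0"
  shows "kappa_series s + kappa_slope s * ln (t / s) \<le> kappa_series t"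
proof -
  have "kappa_series s + kappa_slope s * ln (t / s)
      = (\<Sum>l. kappa_ln_plus (s / \<mu> (Suc l)) + min 1 (s / \<mu> (Suc l)) * ln (t / s))"
    unfolding kappa_series_def kappa_slope_def
    using summable_kappa_series[OF s] summable_kappa_slope[OF s]
    by (simp add: suminf_add suminf_mult2 summable_mult2)
  also have "\<dots> \<le> kappa_series t"
    unfolding kappa_series_def
  proof (rule suminf_le)
    fix l
    have "(t / \<mu> (Suc l)) / (s / \<mu> (Suc l)) = t / s" by simp
    then show "kappa_ln_plus (s / \<mu> (Suc l)) + min 1 (s / \<mu> (Suc l)) * ln (t / s)
        \<le> kappa_ln_plus (t / \<mu> (Suc l))"
      using kappa_ln_plus_support[of "s / \<mu> (Suc l)" "t / \<mu> (Suc l)"] s t mu_pos by simp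
  qed (use s t in \<open>auto intro!: summable_add summable_kappa_series summable_mult2 summable_kappa_slope\<close>)
  finally show ?thesis .
qed

lemma kappa_slope_ge:
  assumes k: "k \<ge> 1" and s: "nu k \<le> s"
  shows "real k \<le> kappa_slope s"
proof -
  have sp: "s > 0" using nu_pos[OF k] s by simp
  have nonneg: "0 \<le> min 1 (s / \<mu> (Suc l))" for l using sp mu_pos[of "Suc l"] by simp
  show ?thesis
  proof (cases "\<exists>l\<ge>k. \<mu> l \<le> s")
    case True
    then obtain l where l: "l \<ge> k" "\<mu> l \<le> s" by auto
    have "min 1 (s / \<mu> (Suc i)) = 1" if "i < k" for i
      using that l mu_mono[of "Suc i" l] mu_pos[of "Suc i"] by simp
    then have "real k = (\<Sum>i<k. min 1 (s / \<mu> (Suc i)))" by simp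
    also have "\<dots> \<le> kappa_slope s"
      unfolding kappa_slope_def by (intro sum_le_suminf summable_kappa_slope sp nonneg) auto
    finally show ?thesis .
  next
    case False
    have "kappa_slope s
        = (\<Sum>n. min 1 (s / \<mu> (Suc (n + (k - 1))))) + (\<Sum>i<k - 1. min 1 (s / \<mu> (Suc i)))"
      unfolding kappa_slope_def using suminf_split_initial_segment[OF summable_kappa_slope[OF sp]]
      by simp
    also have "(\<Sum>n. min 1 (s / \<mu> (Suc (n + (k - 1))))) = (\<Sum>n. s * (1 / \<mu> (n + k)))"
    proof (intro suminf_cong)
      fix n
      have "s < \<mu> (n + k)" using False by (auto simp: not_le dest: spec[of _ "n + k"])
      then show "min 1 (s / \<mu> (Suc (n + (k - 1)))) = s * (1 / \<mu> (n + k))"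
        using k mu_pos[of "n + k"] by (simp add: Suc_diff_1)
    qed
    also have "\<dots> = s * T k"
      unfolding tail_sum_def by (rule suminf_mult[OF summable_inverse_mu_shift])
    finally have "s * T k \<le> kappa_slope s"
      using nonneg by (simp add: sum_nonneg)
    moreover have "real k \<le> s * T k"
      using mult_right_mono[OF s less_imp_le[OF tail_sum_pos[of k]]] nu_mult_tail_sum[of k] by simp
    ultimately show ?thesis by linarith
  qed
qed

lemma kappa_series_ge: "t > 0 \<Longrightarrow> real k * ln t - log_nu_prod k \<le> kappa_series t"
proof (induction k arbitrary: t)
  case 0
  then show ?case using kappa_series_nonneg by (simp add: log_nu_prod_def)
next
  case (Suc k)
  define v where "v = nu (Suc k)"
  have v: "v > 0" unfolding v_def by (rule nu_pos) simp
  show ?case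
  proof (cases "t < v")
    case True
    then have "ln t \<le> ln v" using Suc.prems by simp
    then show ?thesis
      using Suc.IH[OF Suc.prems] by (simp add: log_nu_prod_Suc v_def algebra_simps)
  next
    case False
    have "real (Suc k) * ln (t / v) \<le> kappa_slope v * ln (t / v)"
      using False v unfolding v_def by (intro mult_right_mono kappa_slope_ge) auto
    moreover have "kappa_series v + kappa_slope v * ln (t / v) \<le> kappa_series t"
      by (rule kappa_series_support[OF v Suc.prems])
    moreover have "real k * ln v - log_nu_prod k \<le> kappa_series v"
      by (rule Suc.IH[OF v])
    ultimately show ?thesis
      using v Suc.prems by (simp add: log_nu_prod_Suc v_def ln_div algebra_simps)
  qed
qed

lemma kappa_series_le_split:
  assumes v: "v > 0" and k: "k \<ge> 1"
  shows "kappa_series v \<le> (\<Sum>j\<in>{1..<k}. kappa_ln_plus (v / \<mu> j)) + v * T k"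
proof -
  have "kappa_series v = (\<Sum>n. kappa_ln_plus (v / \<mu> (Suc (n + (k - 1)))))
      + (\<Sum>l<k - 1. kappa_ln_plus (v / \<mu> (Suc l)))"
    unfolding kappa_series_def using suminf_split_initial_segment[OF summable_kappa_series[OF v]]
    by simp
  also have "(\<Sum>l<k - 1. kappa_ln_plus (v / \<mu> (Suc l))) = (\<Sum>j\<in>{1..<k}. kappa_ln_plus (v / \<mu> j))"
    by (rule sum.reindex_bij_witness[where i="\<lambda>j. j - 1" and j=Suc]) auto
  also have "(\<Sum>n. kappa_ln_plus (v / \<mu> (Suc (n + (k - 1))))) \<le> (\<Sum>n. v * (1 / \<mu> (n + k)))"
  proof (rule suminf_le)
    show "kappa_ln_plus (v / \<mu> (Suc (n + (k - 1)))) \<le> v * (1 / \<mu> (n + k))" for n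
      using kappa_ln_plus_le[of "v / \<mu> (n + k)"] v k mu_pos[of "n + k"] by (simp add: Suc_diff_1)
    show "summable (\<lambda>n. kappa_ln_plus (v / \<mu> (Suc (n + (k - 1)))))"
      using summable_ignore_initial_segment[OF summable_kappa_series[OF v], of "k - 1"] by simp
    show "summable (\<lambda>n. v * (1 / \<mu> (n + k)))"
      by (intro summable_mult summable_inverse_mu_shift)
  qed
  also have "\<dots> = v * T k"
    unfolding tail_sum_def by (rule suminf_mult[OF summable_inverse_mu_shift])
  finally show ?thesis by simp
qed

lemma legendre_kappa_omega_tilde_le:
  assumes "y \<ge> 0"
  shows "real k * y - kappa (omega_tilde \<mu>) (exp y) \<le> log_nu_prod k"
  using kappa_series_ge[of "exp y" k] kappa_omega_tilde_bounds(1)[of "exp y"] assms by simp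

context
  fixes \<kappa>' :: "real \<Rightarrow> real" and c :: real
  assumes close: "\<And>t. t \<ge> 0 \<Longrightarrow> \<bar>\<kappa>' t - kappa (omega_tilde \<mu>) t\<bar> \<le> c"
begin

lemma legendre_le: "y \<ge> 0 \<Longrightarrow> real k * y - \<kappa>' (exp y) \<le> log_nu_prod k + c"
  using legendre_kappa_omega_tilde_le[of y k] close[of "exp y"] by simp

lemma bdd_above_legendre: "bdd_above ((\<lambda>y. real k * y - \<kappa>' (exp y)) ` {0..})"
  using legendre_le by (intro bdd_aboveI2[where M="log_nu_prod k + c"]) auto

lemma ln_K_seq_le: "ln (K_seq \<kappa>' k) \<le> log_nu_prod k + c"
  unfolding K_seq_def phi_star_def using legendre_le by (auto intro: cSUP_least)

end

end

locale doubling_weight = nonquasianalytic_weight +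
  fixes D :: real
  assumes D_ge_1: "D \<ge> 1" and mu_double: "\<And>k. \<mu> (2 * k) \<le> D * \<mu> k"
begin

lemma mu_le_power: "\<mu> k \<le> D ^ k * \<mu> 1"
proof (induction k)
  case 0
  then show ?case using mu_mono[of 0 1] by simp
next
  case (Suc k)
  show ?case
  proof (cases "k = 0")
    case False
    have "\<mu> (Suc k) \<le> \<mu> (2 * k)" using False by (intro mu_mono) simp
    also have "\<dots> \<le> D * \<mu> k" by (rule mu_double)
    also have "\<dots> \<le> D * (D ^ k * \<mu> 1)" using Suc D_ge_1 by simp
    finally show ?thesis by simp
  qed (use D_ge_1 mu_pos[of 1] in simp)
qed

lemma tail_sum_lower: "real k \<le> D * \<mu> k * T k"
proof -
  have "real k / \<mu> (k + k) \<le> T k" by (rule tail_sum_ge_block)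
  then have "real k \<le> T k * \<mu> (k + k)" using mu_pos[of "k + k"] by (simp add: field_simps)
  also have "\<dots> \<le> T k * (D * \<mu> k)"
    using mu_double[of k] tail_sum_pos[of k] by (intro mult_left_mono) (auto simp: mult_2)
  finally show ?thesis by (simp add: mult_ac)
qed

lemma nu_le_mu: "nu k \<le> D * \<mu> k"
  using tail_sum_lower[of k] tail_sum_pos[of k] unfolding nu_def by (simp add: field_simps)

lemma ln_nu_le:
  assumes "k \<ge> 1"
  shows "ln (nu k) \<le> real (Suc k) * ln D + ln (\<mu> 1)"
proof -
  have "D * \<mu> k \<le> D * (D ^ k * \<mu> 1)"
    using mu_le_power[of k] D_ge_1 by (intro mult_left_mono) auto
  then have "nu k \<le> D ^ Suc k * \<mu> 1"
    using nu_le_mu[of k] by (simp add: mult.assoc)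
  then have "ln (nu k) \<le> ln (D ^ Suc k * \<mu> 1)"
    using nu_pos[OF assms] by (intro ln_mono)
  also have "\<dots> = real (Suc k) * ln D + ln (\<mu> 1)"
    using D_ge_1 mu_pos[of 1] by (simp add: ln_mult ln_realpow algebra_simps)
  finally show ?thesis .
qed

lemma kappa_ln_plus_twice_nu_le:
  assumes v: "nu k \<ge> 1"
  shows "kappa_ln_plus (2 * nu k) \<le> (1 + ln 2 + 2 * ln D + ln (\<mu> 1)) * real k"
proof -
  have k: "k \<ge> 1" using v by (cases k) (auto simp: nu_def)
  have "kappa_ln_plus (2 * nu k) = 1 + ln 2 + ln (nu k)"
    using v by (simp add: kappa_ln_plus_eq ln_mult)
  also have "\<dots> \<le> 1 + ln 2 + (real k * ln D + ln D + ln (\<mu> 1))"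
    using ln_nu_le[OF k] by (simp add: algebra_simps)
  also have "\<dots> \<le> (1 + ln 2 + 2 * ln D + ln (\<mu> 1)) * real k"
  proof -
    have "0 \<le> 1 + ln 2 + ln D + ln (\<mu> 1)" using D_ge_1 mu_ge_1[of 1] by simp
    then have "1 + ln 2 + ln D + ln (\<mu> 1) \<le> real k * (1 + ln 2 + ln D + ln (\<mu> 1))"
      using mult_right_mono[of 1 "real k"] k by simp
    moreover have "(1 + ln 2 + 2 * ln D + ln (\<mu> 1)) * real k
        = real k * (1 + ln 2 + ln D + ln (\<mu> 1)) + real k * ln D"
      by (simp add: algebra_simps)
    ultimately show ?thesis by linarith
  qed
  finally show ?thesis .
qed

lemma tau_le: "tau \<mu> k \<le> (D + 1) * T k"
proof -
  have "real k / \<mu> k \<le> D * T k"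
    using tail_sum_lower[of k] mu_pos[of k] by (simp add: field_simps mult_ac)
  then show ?thesis unfolding tau_def by (simp add: algebra_simps)
qed

lemma log_close_S_seq: "log_close (S_seq \<mu>) log_nu_prod"
proof -
  have "\<bar>ln (sigma \<mu> i) - ln (nu i)\<bar> \<le> \<bar>ln (tau \<mu> 1)\<bar> + ln (D + 1)" if i: "i \<ge> 1" for i
  proof -
    have ratio: "1 / (D + 1) \<le> T i / tau \<mu> i" "T i / tau \<mu> i \<le> 1"
      using tau_le[of i] tail_sum_le_tau[of i] tau_pos[of i] tail_sum_pos[of i] D_ge_1
      by (auto simp: field_simps)
    have "ln (1 / (D + 1)) \<le> ln (T i / tau \<mu> i)"
      using D_ge_1 by (intro ln_mono ratio) auto
    moreover have "ln (1 / (D + 1)) = - ln (D + 1)" using D_ge_1 by (simp add: ln_div)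
    moreover have "ln (T i / tau \<mu> i) \<le> 0"
      using ratio(2) tail_sum_pos[of i] tau_pos[of i] by simp
    ultimately have "\<bar>ln (T i / tau \<mu> i)\<bar> \<le> ln (D + 1)" by linarith
    moreover have "ln (sigma \<mu> i) = ln (tau \<mu> 1) + ln (T i / tau \<mu> i) + ln (nu i)"
    proof -
      have "0 < tau \<mu> 1" "0 < T i" "0 < tau \<mu> i" "0 < nu i"
        using tau_pos nu_pos[OF i] tail_sum_pos[of i] by simp_all
      then show ?thesis unfolding sigma_eq_nu[OF i] by (simp only: ln_mult) simp
    qed
    ultimately show ?thesis by linarith
  qed
  then have "log_close (\<lambda>k. \<Prod>i=1..k. sigma \<mu> i) (\<lambda>k. \<Sum>i=1..k. ln (nu i))"
    by (intro log_close_prod sigma_pos nu_pos)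
  then show ?thesis unfolding S_seq_eq_prod[abs_def] log_nu_prod_def[abs_def] .
qed

lemma log_close_L_seq: "log_close (L_seq \<mu>) log_nu_prod"
proof (rule log_close_squeeze[OF log_close_S_seq L_seq_pos])
  fix k :: nat assume k: "k \<ge> 1"
  have "ln (S_seq \<mu> k) \<le> ln (tau \<mu> 1 ^ k * L_seq \<mu> k)"
    using S_seq_le_L_seq[of k] S_seq_eq_prod[of k] sigma_pos
    by (intro ln_mono) (auto intro: prod_pos)
  then show "ln (S_seq \<mu> k) \<le> ln (L_seq \<mu> k) + ln (tau \<mu> 1) * real k"
    using tau_pos[of 1] L_seq_pos[of k] by (simp add: ln_mult ln_realpow mult.commute)
  show "ln (L_seq \<mu> k) \<le> log_nu_prod k + (1 + ln 2) * real k"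
    by (rule ln_L_seq_le[OF k])
qed

lemma kappa_ln_plus_div_mu_le:
  assumes j: "j \<ge> 1" and v: "nu j \<le> v"
  shows "kappa_ln_plus (v / \<mu> j) \<le> 1 + ln D + ln (v / nu j)"
proof -
  have nu_j: "nu j > 0" using nu_pos[OF j] .
  have "v / \<mu> j \<le> D * v / nu j"
    using nu_le_mu[of j] nu_j v mu_pos[of j] by (simp add: field_simps mult_left_mono mult.commute)
  moreover have "1 \<le> D * v / nu j"
    using D_ge_1 v nu_j mult_mono[of 1 D "nu j" v] by (simp add: field_simps)
  ultimately have "ln_plus (v / \<mu> j) \<le> ln (D * v / nu j)"
    unfolding ln_plus_def using v nu_j mu_pos[of j] by (auto intro: ln_mono)
  also have "\<dots> = ln D + ln (v / nu j)"
    using D_ge_1 v nu_j by (simp add: ln_mult ln_div)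
  finally show ?thesis using kappa_ln_plus_le_ln_plus[of "v / \<mu> j"] by simp
qed

lemma kappa_series_at_nu_le:
  assumes k: "k \<ge> 1"
  shows "kappa_series (nu k) \<le> real k * ln (nu k) - log_nu_prod k + (2 + ln D) * real k"
proof -
  define v where "v = nu k"
  have v: "v > 0" unfolding v_def using nu_pos[OF k] .
  have "(\<Sum>j\<in>{1..<k}. kappa_ln_plus (v / \<mu> j)) \<le> (\<Sum>j\<in>{1..<k}. 1 + ln D + ln (v / nu j))"
    unfolding v_def by (intro sum_mono kappa_ln_plus_div_mu_le nu_mono) auto
  also have "\<dots> \<le> (\<Sum>j=1..k. 1 + ln D + ln (v / nu j))"
    using k D_ge_1 unfolding v_def by (simp add: sum.atLeastLessThan_Suc flip: atLeastLessThanSuc_atLeastAtMost)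
  also have "\<dots> = (\<Sum>j=1..k. (1 + ln D) + (ln v - ln (nu j)))"
    using v nu_pos by (intro sum.cong) (force simp: ln_div)+
  also have "\<dots> = (1 + ln D) * real k + (real k * ln v - log_nu_prod k)"
    by (simp add: sum.distrib sum_subtractf log_nu_prod_def)
  finally have "kappa_series v \<le> (1 + ln D) * real k + (real k * ln v - log_nu_prod k) + v * T k"
    using kappa_series_le_split[OF v k] by linarith
  then show ?thesis unfolding v_def nu_mult_tail_sum by (simp add: algebra_simps)
qed

context
  fixes \<kappa>' :: "real \<Rightarrow> real" and c :: real
  assumes close: "\<And>t. t \<ge> 0 \<Longrightarrow> \<bar>\<kappa>' t - kappa (omega_tilde \<mu>) t\<bar> \<le> c"
begin

lemma ln_K_seq_ge:
  assumes v: "nu k \<ge> 1"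
  shows "log_nu_prod k \<le> ln (K_seq \<kappa>' k) + (2 + ln D) * real k + 2 * kappa_ln_plus (2 * nu k) + c"
proof -
  have k: "k \<ge> 1" using v by (cases k) (auto simp: nu_def)
  have "real k * ln (nu k) - \<kappa>' (exp (ln (nu k))) \<le> phi_star \<kappa>' (real k)"
    unfolding phi_star_def using v by (intro cSUP_upper bdd_above_legendre[OF close]) auto
  moreover have "\<kappa>' (nu k) \<le> kappa (omega_tilde \<mu>) (nu k) + c"
    using close[of "nu k"] v by auto
  ultimately show ?thesis
    using kappa_omega_tilde_bounds(2)[OF v] kappa_series_at_nu_le[OF k] v
    by (simp add: K_seq_def)
qed

end

lemma log_close_K_seq:
  assumes "normalization_of \<kappa>' (kappa (omega_tilde \<mu>))"
  shows "log_close (K_seq \<kappa>') log_nu_prod"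
proof -
  obtain c where close: "\<And>t. t \<ge> 0 \<Longrightarrow> \<bar>\<kappa>' t - kappa (omega_tilde \<mu>) t\<bar> \<le> c"
    using assms unfolding normalization_of_def by blast
  have "c \<ge> 0" using close[of 0] by linarith
  define a where "a = 4 + 2 * ln 2 + 5 * ln D + 2 * ln (\<mu> 1) + c"
  have "\<bar>ln (K_seq \<kappa>' k) - log_nu_prod k\<bar> \<le> a * real k"
    if k: "k \<ge> max 1 (nat \<lceil>T 1\<rceil>)" for k
  proof -
    have v: "nu k \<ge> 1" using k by (intro one_le_nu) linarith+
    have "c \<le> c * real k" using \<open>c \<ge> 0\<close> k mult_left_mono[of 1 "real k" c] by simp
    moreover have "a * real k = (2 + ln D) * real k
        + 2 * ((1 + ln 2 + 2 * ln D + ln (\<mu> 1)) * real k) + c * real k"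
      unfolding a_def by (simp add: algebra_simps)
    moreover have "0 \<le> (2 + ln D) * real k" "0 \<le> (1 + ln 2 + 2 * ln D + ln (\<mu> 1)) * real k"
      using D_ge_1 mu_ge_1[of 1] by simp_all
    moreover have "log_nu_prod k
        \<le> ln (K_seq \<kappa>' k) + (2 + ln D) * real k + 2 * kappa_ln_plus (2 * nu k) + c"
      by (rule ln_K_seq_ge[OF close v])
    moreover have "ln (K_seq \<kappa>' k) \<le> log_nu_prod k + c"
      by (rule ln_K_seq_le[OF close])
    ultimately show ?thesis
      using kappa_ln_plus_twice_nu_le[OF v] by (intro abs_leI) linarith+
  qed
  moreover have "K_seq \<kappa>' k > 0" for k unfolding K_seq_def by simp
  ultimately show ?thesis
    by (intro log_close_eventually eventually_sequentiallyI[of "max 1 (nat \<lceil>T 1\<rceil>)"]) auto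
qed

end

theorem theorem5p6:
  fixes \<mu> :: "nat \<Rightarrow> real" and \<kappa>' :: "real \<Rightarrow> real"
  assumes "weight_seq \<mu>"
    and "non_quasianalytic \<mu>"
    and "moderate_growth (M_seq \<mu>)"
    and "normalization_of \<kappa>' (kappa (omega_tilde \<mu>))"
  shows "seq_equiv (S_seq \<mu>) (K_seq \<kappa>') \<and> seq_equiv (K_seq \<kappa>') (L_seq \<mu>)
         \<and> seq_equiv (S_seq \<mu>) (L_seq \<mu>)"
proof -
  interpret nonquasianalytic_weight \<mu>
    using assms(1,2) by unfold_locales
  obtain D where "D \<ge> 1" and "\<And>k. \<mu> (2 * k) \<le> D * \<mu> k"
    using doubling_if_moderate_growth[OF assms(3)] by blast
  then interpret doubling_weight \<mu> D
    by unfold_locales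
  have S: "log_close (S_seq \<mu>) log_nu_prod" by (rule log_close_S_seq)
  have K: "log_close (K_seq \<kappa>') log_nu_prod" by (rule log_close_K_seq[OF assms(4)])
  have L: "log_close (L_seq \<mu>) log_nu_prod" by (rule log_close_L_seq)
  show ?thesis
    using seq_equiv_if_log_close[OF S K] seq_equiv_if_log_close[OF K L]
      seq_equiv_if_log_close[OF S L] by blast
qed

end
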